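(* Let $q=r^2$ with $r$ an odd prime power, $\theta$ a primitive element of $\mathbb{F}_q$, and $q-1=e_1f_1=e_2f_2$ with positive integers, where for some integer $l\geq 2$ we have $e_1\equiv 2^l\pmod{2^{l+1}}$ and $2^l\mid e_2$, and moreover $2e_2\mid e_1(r-1)$ and $e_1\mid e_2(r+1)$. Let $A=\langle\theta^{e_1}\rangle$, $B=\langle\theta^{e_2}\rangle$, $\beta=\theta^{e_2}$, $\gamma=\theta^{e_1/2}$, $D_1=\frac{e_1}{\gcd(e_1,e_2)}$, $D_2=\frac{e_2}{\gcd(e_1,e_2)}$. Let $1\leq s\leq D_1$, $1\leq t\leq D_2$, let $i_1,\dots,i_s$ be integers pairwise distinct modulo $D_1$ and $j_1,\dots,j_t$ integers pairwise distinct modulo $D_2$, and set $M=\bigcup_{\mu=1}^s\beta^{i_\mu}A$, $N=\bigcup_{\nu=1}^t\gamma^{2j_\nu+1}B$, $S=M\cup N$. Then $\eta(L_S(b))=(-1)^{\frac{(s-1)(r+1)}{2}}$ for every $b\in M$, and $\eta(L_S(b))=1$ for every $b\in N$.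
   Context: $\eta$ denotes the quadratic character of $\mathbb{F}_q^*$ ($\eta(x)=1$ if $x$ is a nonzero square, $-1$ otherwise). For a finite set $S\subseteq\mathbb{F}_q$ and $b\in S$, $L_S(b)=\prod_{c\in S,\,c\neq b}(b-c)$. $\langle x\rangle$ denotes the cyclic subgroup of $\mathbb{F}_q^*$ generated by $x$. *)

theory Defs
  imports "HOL-Computational_Algebra.Primes" "HOL-Library.Cardinality" "HOL-Number_Theory.Cong"
begin

definition qchar :: "'a::{finite,field} \<Rightarrow> int" where
  "qchar x = (if x = 0 then 0 else if (\<exists>y. y ^ 2 = x) then 1 else -1)"

definition LS :: "'a::field set \<Rightarrow> 'a \<Rightarrow> 'a" where
  "LS S b = (\<Prod>c\<in>S - {b}. (b - c))"

definition cyc :: "'a::field \<Rightarrow> 'a set" where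
  "cyc x = {x ^ k | k. True}"

definition primitive_elem :: "'a::{finite,field} \<Rightarrow> bool" where
  "primitive_elem \<theta> \<longleftrightarrow> \<theta> \<noteq> 0 \<and> (\<forall>x. x \<noteq> 0 \<longrightarrow> (\<exists>k::nat. x = \<theta> ^ k))"

definition prime_power :: "nat \<Rightarrow> bool" where
  "prime_power r \<longleftrightarrow> (\<exists>p k. prime p \<and> k \<ge> 1 \<and> r = p ^ k)"

end

theory Submission
  imports Defs "HOL-Computational_Algebra.Polynomial" "HOL-Number_Theory.Residues"
begin

text \<open>
  With \<open>h = (q - 1) / 2\<close>, Euler's criterion gives \<open>\<eta>(x) = x ^ h\<close>, so it suffices to
  compute \<open>L_S(b) ^ h\<close>.  A coset \<open>C = wH\<close> of the subgroup \<open>H\<close> of order \<open>f\<close> is the set of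
  roots of \<open>X ^ f - w ^ f\<close>; hence \<open>\<Prod>c\<in>C. (b - c) = b ^ f - w ^ f\<close> for \<open>b \<notin> C\<close>, while
  \<open>\<Prod>c\<in>C - {b}. (b - c) = f b ^ (f - 1)\<close> for \<open>b \<in> C\<close>.  The latter factor is a square, as
  \<open>f\<close> lies in the prime field and \<open>b\<close> is an even power of \<open>\<theta>\<close>.  For the other cosets,
  \<open>b ^ f\<close> and \<open>w ^ f\<close> either both lie in \<open>\<bbbF>\<^sub>r\<close>, where \<open>x ^ h = 1\<close>, or lie up to sign in the
  subgroup of order \<open>(r + 1) / 2\<close>.  On that subgroup Frobenius is inversion, so
  \<open>(x - y) ^ (r - 1) = -1 / (x y)\<close> and \<open>(x - y) ^ h = (-1) ^ ((r + 1) / 2)\<close>; with a sign flip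
  the same computation gives \<open>1\<close>.  Thus for \<open>b \<in> M\<close> each of the other \<open>s - 1\<close> cosets of \<open>M\<close>
  contributes \<open>(-1) ^ ((r + 1) / 2)\<close> and every other factor contributes \<open>1\<close>.
\<close>

section \<open>Finite fields and primitive elements\<close>

text \<open>The library version \<open>finite_field_power_card_eq_same\<close> is stated for the
  class \<open>finite_field\<close>, which a type of sort \<open>{finite,field}\<close> is not known to instantiate.\<close>
lemma finite_field_power_card_minus_one:
  fixes x :: "'a::{finite,field}"
  assumes "x \<noteq> 0"
  shows "x ^ (CARD('a) - 1) = 1"
proof -
  have "x * (\<Prod>y\<in>UNIV-{0}. x * y) = x * x ^ (CARD('a) - 1) * \<Prod>(UNIV-{0::'a})"
    by (simp add: prod.distrib mult_ac card_Diff_singleton)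
  also have "(\<Prod>y\<in>UNIV-{0}. x * y) = \<Prod>(UNIV-{0::'a})"
    by (rule prod.reindex_bij_witness[of _ "\<lambda>y. y / x" "\<lambda>y. x * y"]) (use assms in auto)
  finally show ?thesis
    using assms by simp
qed

lemma card_field_ge_2: "CARD('a::{finite,field}) \<ge> 2"
  using card_mono[of UNIV "{0::'a, 1}"] by simp

lemma power_half_square:
  fixes y :: "'a::{finite,field}"
  assumes "odd CARD('a)" and "y \<noteq> 0"
  shows "(y ^ 2) ^ ((CARD('a) - 1) div 2) = 1"
proof -
  have "2 * ((CARD('a) - 1) div 2) = CARD('a) - 1" using assms(1) by (elim oddE) simp
  thus ?thesis using finite_field_power_card_minus_one[OF assms(2)] by (simp flip: power_mult)
qed

lemma of_nat_neq_0_if_dvd_card_minus_one: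
  assumes "f dvd CARD('a::{finite,field}) - 1"
  shows "(of_nat f :: 'a) \<noteq> 0"
proof
  assume "(of_nat f :: 'a) = 0"
  moreover obtain e where "CARD('a) - 1 = f * e" using assms by blast
  ultimately have "(of_nat (CARD('a) - 1) :: 'a) = 0" by simp
  moreover have "(of_nat CARD('a) :: 'a) = 0"
    using CHAR_dvd_CARD[where 'a='a] by (simp only: of_nat_eq_0_iff_char_dvd)
  ultimately show False using card_field_ge_2[where 'a='a] by (simp add: of_nat_diff)
qed

lemma minus_one_neq_one_if_odd_card:
  assumes "odd CARD('a::{finite,field})"
  shows "(-1::'a) \<noteq> 1"
proof
  assume "(-1::'a) = 1"
  hence "of_nat 2 = (0::'a)" by (simp add: eq_neg_iff_add_eq_0)
  hence "CHAR('a) dvd 2" by (simp only: of_nat_eq_0_iff_char_dvd)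
  hence "CHAR('a) dvd gcd 2 CARD('a)" using CHAR_dvd_CARD[where 'a='a] by simp
  with assms show False by (simp add: gcd.commute)
qed

lemma primitive_elem_power_int_mod:
  fixes \<theta> :: "'a::{finite,field}"
  assumes "primitive_elem \<theta>"
  shows "\<theta> powi z = \<theta> ^ nat (z mod int (CARD('a) - 1))"
proof -
  define n where "n = int (CARD('a) - 1)"
  have "\<theta> \<noteq> 0" using assms by (simp add: primitive_elem_def)
  have "\<theta> powi z = \<theta> powi (z mod n) * (\<theta> ^ (CARD('a) - 1)) powi (z div n)"
    by (simp add: \<open>\<theta> \<noteq> 0\<close> power_int_power n_def flip: power_int_add)
  also have "\<dots> = \<theta> ^ nat (z mod n)"
    using finite_field_power_card_minus_one[OF \<open>\<theta> \<noteq> 0\<close>] card_field_ge_2[where 'a='a]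
    by (simp add: power_int_nonneg_exp n_def)
  finally show ?thesis unfolding n_def .
qed

lemma primitive_elem_inj_on:
  fixes \<theta> :: "'a::{finite,field}"
  assumes "primitive_elem \<theta>"
  shows "inj_on (\<lambda>k. \<theta> ^ k) {..<CARD('a) - 1}"
proof (rule eq_card_imp_inj_on)
  have "(\<lambda>k. \<theta> ^ k) ` {..<CARD('a) - 1} = UNIV - {0}"
  proof
    show "UNIV - {0} \<subseteq> (\<lambda>k. \<theta> ^ k) ` {..<CARD('a) - 1}"
    proof
      fix x :: 'a assume "x \<in> UNIV - {0}"
      then obtain k where "x = \<theta> ^ k" using assms by (auto simp: primitive_elem_def)
      hence "x = \<theta> ^ nat (int k mod int (CARD('a) - 1))"
        using primitive_elem_power_int_mod[OF assms, of "int k"] by simp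
      moreover have "nat (int k mod int (CARD('a) - 1)) < CARD('a) - 1"
        using card_field_ge_2[where 'a='a] by (simp add: nat_less_iff)
      ultimately show "x \<in> (\<lambda>k. \<theta> ^ k) ` {..<CARD('a) - 1}" by blast
    qed
  qed (use assms in \<open>auto simp: primitive_elem_def\<close>)
  thus "card ((\<lambda>k. \<theta> ^ k) ` {..<CARD('a) - 1}) = card {..<CARD('a) - 1}"
    by (simp add: card_Diff_singleton)
qed simp

lemma primitive_elem_power_int_eq_iff:
  fixes \<theta> :: "'a::{finite,field}"
  assumes "primitive_elem \<theta>"
  shows "\<theta> powi a = \<theta> powi b \<longleftrightarrow> int (CARD('a) - 1) dvd a - b"
proof -
  define n where "n = int (CARD('a) - 1)"
  have n: "n > 0" using card_field_ge_2[where 'a='a] by (simp add: n_def)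
  have "\<theta> powi a = \<theta> powi b \<longleftrightarrow> nat (a mod n) = nat (b mod n)"
    using inj_onD[OF primitive_elem_inj_on[OF assms], of "nat (a mod n)" "nat (b mod n)"] n
    by (auto simp: primitive_elem_power_int_mod[OF assms] n_def nat_less_iff)
  also have "\<dots> \<longleftrightarrow> n dvd a - b"
    using n by (simp add: eq_nat_nat_iff mod_eq_dvd_iff)
  finally show ?thesis unfolding n_def .
qed

lemma primitive_elem_power_half:
  fixes \<theta> :: "'a::{finite,field}"
  assumes "primitive_elem \<theta>" and "odd CARD('a)"
  shows "\<theta> ^ ((CARD('a) - 1) div 2) = -1"
proof -
  define h where "h = (CARD('a) - 1) div 2"
  have card: "CARD('a) - 1 = 2 * h" "h > 0"
    using assms(2) card_field_ge_2[where 'a='a] by (auto simp: h_def elim!: oddE)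
  have "(\<theta> ^ h) ^ 2 = \<theta> ^ (CARD('a) - 1)"
    unfolding card(1) by (metis power_mult mult.commute)
  hence "(\<theta> ^ h) ^ 2 = 1"
    using finite_field_power_card_minus_one[of \<theta>] assms(1) by (simp add: primitive_elem_def)
  moreover have "\<theta> ^ h \<noteq> 1"
  proof
    assume "\<theta> ^ h = 1"
    hence "int (CARD('a) - 1) dvd int h"
      using primitive_elem_power_int_eq_iff[OF assms(1), of "int h" 0] by simp
    thus False using card by (simp add: zdvd_not_zless)
  qed
  ultimately show ?thesis unfolding h_def by (simp add: power2_eq_1_iff)
qed

lemma qchar_eq_power_half:
  fixes \<theta> x :: "'a::{finite,field}"
  assumes "primitive_elem \<theta>" and "odd CARD('a)" and "x \<noteq> 0"
  shows "of_int (qchar x) = x ^ ((CARD('a) - 1) div 2)"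
proof -
  obtain k where k: "x = \<theta> ^ k" using assms(1,3) by (auto simp: primitive_elem_def)
  have "x ^ ((CARD('a) - 1) div 2) = (\<theta> ^ ((CARD('a) - 1) div 2)) ^ k"
    unfolding k by (metis power_mult mult.commute)
  hence power_half: "x ^ ((CARD('a) - 1) div 2) = (-1) ^ k"
    by (simp only: primitive_elem_power_half[OF assms(1,2)])
  have "(\<exists>y. y ^ 2 = x) \<longleftrightarrow> even k"
  proof
    assume "\<exists>y. y ^ 2 = x"
    then obtain y where y: "y ^ 2 = x" by blast
    then obtain m where "y = \<theta> ^ m" using assms(1,3) by (auto simp: primitive_elem_def)
    hence "\<theta> ^ (2 * m) = \<theta> ^ k" using y k by (metis power_mult mult.commute)
    hence "\<theta> powi int (2 * m) = \<theta> powi int k" by (simp only: power_int_of_nat)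
    hence "int (CARD('a) - 1) dvd int (2 * m) - int k"
      by (simp only: primitive_elem_power_int_eq_iff[OF assms(1)])
    moreover have "even (int (CARD('a) - 1))" using assms(2) card_field_ge_2[where 'a='a] by simp
    ultimately have "even (int (2 * m) - int k)" using dvd_trans by blast
    thus "even k" by simp
  next
    assume "even k"
    thus "\<exists>y. y ^ 2 = x" by (auto simp: k power_mult mult.commute elim!: evenE intro: exI[of _ "\<theta> ^ (k div 2)"])
  qed
  thus ?thesis using assms(3) power_half by (simp add: qchar_def)
qed

lemma qchar_eq_sign_if_power_half:
  fixes \<theta> x :: "'a::{finite,field}"
  assumes "primitive_elem \<theta>" and "odd CARD('a)" and "x \<noteq> 0"
    and "x ^ ((CARD('a) - 1) div 2) = (-1) ^ m"
  shows "qchar x = (-1) ^ m"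
  using qchar_eq_power_half[OF assms(1-3)] assms(3,4) minus_one_neq_one_if_odd_card[OF assms(2)]
  by (cases "even m") (auto simp: qchar_def split: if_splits)

lemma power_power_commute: "((x::'a::monoid_mult) ^ m) ^ n = (x ^ n) ^ m"
  by (simp add: mult.commute flip: power_mult)

lemma power_int_power_commute: "((x::'a::division_ring) powi m) ^ n = (x ^ n) powi m"
  by (simp add: power_int_power power_int_power' mult.commute)

lemma power_int_power_eq_if_power_eq:
  fixes x :: "'a::division_ring"
  assumes "x ^ n = x"
  shows "(x powi m) ^ n = x powi m"
  by (simp add: power_int_power_commute assms)

lemma prod_power_eq_one:
  assumes "\<And>x. x \<in> A \<Longrightarrow> f x ^ n = 1"
  shows "prod f A ^ n = (1::'a::comm_semiring_1)"
  unfolding prod_power_distrib by (rule prod.neutral) (simp add: assms)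

lemma int_div_gcd_dvd:
  fixes a b :: nat and x :: int
  assumes "int a dvd int b * x" and "a \<noteq> 0"
  shows "int (a div gcd a b) dvd x"
proof -
  define g where "g = gcd a b"
  have "g > 0" using assms(2) by (simp add: g_def)
  have "int g * int (a div g) dvd int g * (int (b div g) * x)"
    using assms(1) by (simp add: g_def flip: mult.assoc of_nat_mult)
  hence "int (a div g) dvd int (b div g) * x" using \<open>g > 0\<close> by simp
  moreover have "coprime (int (a div g)) (int (b div g))"
    using div_gcd_coprime[of a b] assms(2) by (simp add: g_def)
  ultimately show ?thesis by (simp add: g_def coprime_dvd_mult_right_iff)
qed

lemma dvd_if_dvd_double_odd_part:
  fixes a b :: nat
  assumes "a = 2 ^ l * c" and "odd c" and "2 ^ l dvd b" and "a dvd 2 * b"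
  shows "a dvd b"
proof -
  have "c dvd 2 * b" using assms(1,4) dvd_mult_right by blast
  hence "c dvd b" using assms(2) by (simp add: coprime_dvd_mult_right_iff)
  thus ?thesis using assms(1-3) by (simp add: divides_mult)
qed

section \<open>Products over the roots of \<open>X ^ f - a\<close>\<close>

lemma prod_linear_factors_roots_of_power_sub:
  fixes C :: "'a::field set"
  assumes "finite C" and "card C = f" and "f > 0" and "\<forall>c\<in>C. c ^ f = a"
  shows "(\<Prod>c\<in>C. [:-c, 1:]) = [:0, 1:] ^ f - [:a:]"
proof (rule poly_eqI_degree_lead_coeff[of _ f _ C])
  have degree: "degree (\<Prod>c\<in>C. [:-c, 1:]) = f"
    using degree_prod_eq_sum_degree[of C "\<lambda>c. [:-c, 1:]"] assms(2) by simp
  moreover have "lead_coeff (\<Prod>c\<in>C. [:-c, 1:]) = 1" by (simp add: lead_coeff_prod)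
  ultimately show "poly.coeff (\<Prod>c\<in>C. [:-c, 1:]) f = poly.coeff ([:0, 1:] ^ f - [:a:]) f"
    using assms(3) coeff_linear_power[of "0::'a" f] by (cases f) auto
  show "degree (\<Prod>c\<in>C. [:-c, 1:]) \<le> f" using degree by simp
  show "degree ([:0, 1:] ^ f - [:a:]) \<le> f"
    by (intro degree_diff_le) (auto intro: order.trans[OF degree_power_le])
  show "card C \<ge> f" using assms(2) by simp
  fix z assume "z \<in> C"
  thus "poly (\<Prod>c\<in>C. [:-c, 1:]) z = poly ([:0, 1:] ^ f - [:a:]) z"
    using assms(1,4) by (simp add: poly_prod poly_power)
qed

lemma prod_sub_roots_of_power_sub:
  fixes C :: "'a::field set"
  assumes "finite C" and "card C = f" and "f > 0" and "\<forall>c\<in>C. c ^ f = a"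
  shows "(\<Prod>c\<in>C. x - c) = x ^ f - a"
  using arg_cong[OF prod_linear_factors_roots_of_power_sub[OF assms], of "\<lambda>p. poly p x"]
  by (simp add: poly_prod poly_power)

text \<open>Dividing \<open>X ^ f - b ^ f\<close> by \<open>X - b\<close> leaves \<open>\<Sum>k<f. b ^ (f - 1 - k) X ^ k\<close>, whose value
  at \<open>b\<close> is \<open>f b ^ (f - 1)\<close>.\<close>
lemma prod_sub_other_roots_of_power_sub:
  fixes C :: "'a::field set"
  assumes "finite C" and "card C = f" and "f > 0" and "\<forall>c\<in>C. c ^ f = a" and "b \<in> C"
  shows "(\<Prod>c\<in>C - {b}. b - c) = of_nat f * b ^ (f - 1)"
proof -
  define Q where "Q = (\<Sum>k<f. [:b:] ^ (f - Suc k) * [:0, 1::'a:] ^ k)"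
  have "[:-b, 1:] * (\<Prod>c\<in>C - {b}. [:-c, 1:]) = (\<Prod>c\<in>C. [:-c, 1:])"
    by (rule prod.remove[OF assms(1,5), symmetric])
  also have "\<dots> = [:0, 1:] ^ f - [:b:] ^ f"
    using prod_linear_factors_roots_of_power_sub[OF assms(1-4)] assms(4,5) by (simp add: poly_const_pow)
  also have "\<dots> = [:-b, 1:] * Q"
    unfolding Q_def using power_diff_sumr2[of "[:0, 1::'a:]" f "[:b:]"] by simp
  finally have Q: "(\<Prod>c\<in>C - {b}. [:-c, 1:]) = Q" by (subst (asm) mult_cancel_left) simp
  have "(\<Prod>c\<in>C - {b}. b - c) = poly (\<Prod>c\<in>C - {b}. [:-c, 1:]) b" by (simp add: poly_prod)
  also have "\<dots> = poly Q b" by (simp only: Q)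
  also have "\<dots> = (\<Sum>k<f. b ^ (f - 1))"
    unfolding Q_def poly_sum by (intro sum.cong) (auto simp: poly_power simp flip: power_add)
  finally show ?thesis by simp
qed

lemma LS_nonzero: "finite S \<Longrightarrow> LS S b \<noteq> 0"
  by (simp add: LS_def)

lemma LS_union:
  assumes "finite A" and "finite B" and "A \<inter> B = {}" and "b \<in> A"
  shows "LS (A \<union> B) b = LS A b * (\<Prod>c\<in>B. b - c)"
proof -
  have "(A \<union> B) - {b} = (A - {b}) \<union> B" and "(A - {b}) \<inter> B = {}" using assms(3,4) by blast+
  thus ?thesis using assms(1,2) by (simp add: LS_def prod.union_disjoint)
qed

lemma LS_UN:
  assumes "finite K" and "\<forall>k\<in>K. finite (C k)"
    and "\<forall>k\<in>K. \<forall>k'\<in>K. k \<noteq> k' \<longrightarrow> C k \<inter> C k' = {}"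
    and "k0 \<in> K" and "b \<in> C k0"
  shows "LS (\<Union>k\<in>K. C k) b = LS (C k0) b * (\<Prod>k\<in>K - {k0}. \<Prod>c\<in>C k. b - c)"
proof -
  have "(\<Union>k\<in>K. C k) = C k0 \<union> (\<Union>k\<in>K - {k0}. C k)" using assms(4) by blast
  moreover have "C k0 \<inter> (\<Union>k\<in>K - {k0}. C k) = {}"
    using assms(3,4) by blast
  moreover have "(\<Prod>c\<in>(\<Union>k\<in>K - {k0}. C k). b - c) = (\<Prod>k\<in>K - {k0}. \<Prod>c\<in>C k. b - c)"
    using assms(1-3) by (intro prod.UNION_disjoint) auto
  ultimately show ?thesis using assms by (simp add: LS_union)
qed

section \<open>The field with \<open>r\<^sup>2\<close> elements\<close>

lemma prime_CHAR_finite_field: "prime CHAR('a::{finite,field})"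
  by (intro prime_CHAR_semidom finite_imp_CHAR_pos) simp

lemma CHAR_power_if_card_eq_square:
  assumes "prime_power r" and "CARD('a::{finite,field}) = r ^ 2"
  shows "\<exists>k. r = CHAR('a) ^ k"
proof -
  obtain p k where p: "prime p" "r = p ^ k" using assms(1) by (auto simp: prime_power_def)
  have "CHAR('a) dvd p ^ (2 * k)"
    using CHAR_dvd_CARD[where 'a='a] assms(2) p(2) by (simp add: power_mult mult.commute)
  hence "CHAR('a) dvd p" using prime_CHAR_finite_field[where 'a='a] prime_dvd_power by blast
  hence "CHAR('a) = p" using prime_CHAR_finite_field[where 'a='a] p(1) primes_dvd_imp_eq by blast
  thus ?thesis using p(2) by blast
qed

lemma frobenius_diff:
  fixes x y :: "'a::{finite,field}"
  assumes "r = CHAR('a) ^ k" and "odd r"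
  shows "(x - y) ^ r = x ^ r - y ^ r"
  using freshmans_dream'[OF prime_CHAR_finite_field assms(1), of x "-y"] assms(2) by simp

lemma of_nat_power_CHAR_power:
  assumes "r = CHAR('a::{finite,field}) ^ k"
  shows "(of_nat m :: 'a) ^ r = of_nat m"
proof (induction m)
  case 0
  show ?case using assms prime_gt_0_nat[OF prime_CHAR_finite_field[where 'a='a]] by simp
next
  case (Suc m)
  thus ?case using freshmans_dream'[OF prime_CHAR_finite_field assms, of "of_nat m" 1] by (simp add: add.commute)
qed

lemma card_minus_one_half:
  assumes "CARD('a) = r ^ 2" and "odd r"
  shows "(CARD('a) - 1) div 2 = (r - 1) * ((r + 1) div 2)"
  using assms by (elim oddE) (simp add: power2_eq_square algebra_simps)

lemma power_half_eq_one_if_fixed: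
  fixes x :: "'a::{finite,field}"
  assumes "CARD('a) = r ^ 2" and "odd r" and "x \<noteq> 0" and "x ^ r = x"
  shows "x ^ ((CARD('a) - 1) div 2) = 1"
proof -
  have "x ^ (r - 1) * x = 1 * x" using assms(2,4) by (simp flip: power_Suc2)
  hence "x ^ (r - 1) = 1" using assms(3) by simp
  thus ?thesis unfolding card_minus_one_half[OF assms(1,2)] power_mult by simp
qed

lemma power_half_of_nat:
  assumes "CARD('a::{finite,field}) = r ^ 2" and "r = CHAR('a) ^ k" and "odd r"
    and "f dvd CARD('a) - 1"
  shows "(of_nat f :: 'a) ^ ((CARD('a) - 1) div 2) = 1"
  by (rule power_half_eq_one_if_fixed[OF assms(1,3) of_nat_neq_0_if_dvd_card_minus_one[OF assms(4)]
        of_nat_power_CHAR_power[OF assms(2)]])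

lemma power_half_diff_fixed:
  fixes x y :: "'a::{finite,field}"
  assumes "CARD('a) = r ^ 2" and "r = CHAR('a) ^ k" and "odd r"
    and "x ^ r = x" and "y ^ r = y" and "x \<noteq> y"
  shows "(x - y) ^ ((CARD('a) - 1) div 2) = 1"
proof -
  have "(x - y) ^ r = x - y" using frobenius_diff[OF assms(2,3)] assms(4,5) by simp
  thus ?thesis using power_half_eq_one_if_fixed[OF assms(1,3)] assms(6) by simp
qed

text \<open>Frobenius acts as inversion on the norm-one subgroup \<open>x ^ (r + 1) = 1\<close>, so
  \<open>(x - y) ^ r = - (x - y) / (x y)\<close>.\<close>
lemma power_half_diff_norm_one:
  fixes x y :: "'a::{finite,field}"
  assumes "CARD('a) = r ^ 2" and "r = CHAR('a) ^ k" and "odd r"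
    and "x ^ (r + 1) = 1" and "y ^ (r + 1) = 1" and "x \<noteq> y"
  shows "(x - y) ^ ((CARD('a) - 1) div 2) * (x * y) ^ ((r + 1) div 2) = (-1) ^ ((r + 1) div 2)"
proof -
  define d where "d = x - y"
  have "d \<noteq> 0" using assms(6) by (simp add: d_def)
  have x: "x ^ r * x = 1" and y: "y ^ r * y = 1" using assms(4,5) by (simp_all add: mult.commute)
  have "d ^ (r - 1) * d = d ^ r" using assms(3) by (cases r) simp_all
  also have "d ^ r = x ^ r - y ^ r" unfolding d_def by (rule frobenius_diff[OF assms(2,3)])
  finally have "d ^ (r - 1) * d * (x * y) = (x ^ r - y ^ r) * (x * y)" by simp
  also have "\<dots> = (x ^ r * x) * y - (y ^ r * y) * x" by (simp add: algebra_simps)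
  also have "\<dots> = -1 * d" by (simp add: x y d_def)
  finally have "d ^ (r - 1) * (x * y) = -1"
    using \<open>d \<noteq> 0\<close> by (metis mult.assoc mult.commute mult_cancel_left)
  hence "(d ^ (r - 1)) ^ ((r + 1) div 2) * (x * y) ^ ((r + 1) div 2) = (-1) ^ ((r + 1) div 2)"
    by (metis power_mult_distrib)
  thus ?thesis unfolding d_def card_minus_one_half[OF assms(1,3)] power_mult .
qed

lemma power_half_diff_norm_one_squares:
  fixes x y :: "'a::{finite,field}"
  assumes "CARD('a) = r ^ 2" and "r = CHAR('a) ^ k" and "odd r"
    and "x ^ ((r + 1) div 2) = 1" and "y ^ ((r + 1) div 2) = 1" and "x \<noteq> y"
  shows "(x - y) ^ ((CARD('a) - 1) div 2) = (-1) ^ ((r + 1) div 2)"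
proof -
  have r: "r + 1 = (r + 1) div 2 * 2" using assms(3) by (elim oddE) simp
  have "x ^ (r + 1) = 1" "y ^ (r + 1) = 1"
    using assms(4,5) by (subst r, simp add: power_mult)+
  thus ?thesis
    using power_half_diff_norm_one[OF assms(1-3) _ _ assms(6)] assms(4,5) by (simp add: power_mult_distrib)
qed

lemma power_half_diff_neg_norm_one_squares:
  fixes x y :: "'a::{finite,field}"
  assumes "CARD('a) = r ^ 2" and "r = CHAR('a) ^ k" and "odd r"
    and "(- x) ^ ((r + 1) div 2) = 1" and "y ^ ((r + 1) div 2) = 1" and "x \<noteq> y"
  shows "(x - y) ^ ((CARD('a) - 1) div 2) = 1"
proof -
  define R where "R = (r + 1) div 2"
  have r: "r + 1 = R * 2" using assms(3) by (elim oddE) (simp add: R_def)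
  have "x ^ (r + 1) = ((- x) ^ R) ^ 2" "y ^ (r + 1) = (y ^ R) ^ 2"
    unfolding r by (simp_all flip: power_mult)
  moreover have "(x * y) ^ R = (-1) ^ R * ((- x) ^ R * y ^ R)"
    by (simp flip: power_mult_distrib)
  ultimately have "(x - y) ^ ((CARD('a) - 1) div 2) * (-1) ^ R = 1 * (-1) ^ R"
    using power_half_diff_norm_one[OF assms(1-3) _ _ assms(6)] assms(4,5) by (simp add: R_def)
  thus ?thesis by (subst (asm) mult_cancel_right) simp
qed

section \<open>Cosets in the multiplicative group\<close>

lemma power_eq_if_mem_coset:
  assumes "g ^ f = 1" and "c \<in> (\<lambda>a. w * a) ` cyc g"
  shows "c ^ f = w ^ f"
proof -
  obtain k where "c = w * g ^ k" using assms(2) by (auto simp: cyc_def)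
  moreover have "(g ^ k) ^ f = (g ^ f) ^ k" by (simp add: mult.commute flip: power_mult)
  ultimately show ?thesis using assms(1) by (simp add: power_mult_distrib)
qed

lemma mem_coset_self: "w \<in> (\<lambda>a. w * a) ` cyc g"
  by (rule image_eqI[of _ _ 1]) (auto simp: cyc_def intro: exI[of _ 0])

lemma card_cyc_primitive_power:
  fixes \<theta> :: "'a::{finite,field}"
  assumes "primitive_elem \<theta>" and "e * f = CARD('a) - 1"
  shows "card (cyc (\<theta> ^ e)) = f"
proof -
  have "e * f > 0" using assms(2) card_field_ge_2[where 'a='a] by simp
  hence "f > 0" "e > 0" by simp_all
  have "\<theta> \<noteq> 0" using assms(1) by (simp add: primitive_elem_def)
  have period: "(\<theta> ^ e) ^ f = 1"
    using finite_field_power_card_minus_one[OF \<open>\<theta> \<noteq> 0\<close>] assms(2) by (simp flip: power_mult)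
  have "cyc (\<theta> ^ e) = (\<lambda>k. \<theta> ^ k) ` (\<lambda>k. e * k) ` {..<f}"
  proof
    show "cyc (\<theta> ^ e) \<subseteq> (\<lambda>k. \<theta> ^ k) ` (\<lambda>k. e * k) ` {..<f}"
    proof
      fix x assume "x \<in> cyc (\<theta> ^ e)"
      then obtain k where "x = (\<theta> ^ e) ^ k" by (auto simp: cyc_def)
      also have "\<dots> = (\<theta> ^ e) ^ (f * (k div f) + k mod f)" by simp
      also have "\<dots> = ((\<theta> ^ e) ^ f) ^ (k div f) * (\<theta> ^ e) ^ (k mod f)"
        by (simp only: power_add power_mult)
      finally have x: "x = \<theta> ^ (e * (k mod f))" by (simp add: period power_mult)
      have "k mod f \<in> {..<f}" using \<open>f > 0\<close> by simp
      thus "x \<in> (\<lambda>k. \<theta> ^ k) ` (\<lambda>k. e * k) ` {..<f}" unfolding x image_image by (rule imageI)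
    qed
    show "(\<lambda>k. \<theta> ^ k) ` (\<lambda>k. e * k) ` {..<f} \<subseteq> cyc (\<theta> ^ e)"
      by (auto simp: cyc_def power_mult)
  qed
  moreover have "(\<lambda>k. e * k) ` {..<f} \<subseteq> {..<CARD('a) - 1}"
    unfolding assms(2)[symmetric] using \<open>e > 0\<close> by auto
  hence "inj_on (\<lambda>k. \<theta> ^ k) ((\<lambda>k. e * k) ` {..<f})"
    by (rule inj_on_subset[OF primitive_elem_inj_on[OF assms(1)]])
  moreover have "inj_on (\<lambda>k. e * k) {..<f}" using \<open>e > 0\<close> by (auto intro: inj_onI)
  ultimately show ?thesis by (simp add: card_image)
qed

lemma roots_of_power_sub_coset:
  fixes \<theta> w :: "'a::{finite,field}"
  assumes "primitive_elem \<theta>" and "e * f = CARD('a) - 1" and "w \<noteq> 0"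
  shows "card ((\<lambda>a. w * a) ` cyc (\<theta> ^ e)) = f" and "f > 0"
    and "\<forall>c\<in>(\<lambda>a. w * a) ` cyc (\<theta> ^ e). c ^ f = w ^ f"
proof -
  have "\<theta> \<noteq> 0" using assms(1) by (simp add: primitive_elem_def)
  show "card ((\<lambda>a. w * a) ` cyc (\<theta> ^ e)) = f"
    using assms(3) card_cyc_primitive_power[OF assms(1,2)] by (simp add: card_image inj_on_def)
  show "f > 0" using assms(2) card_field_ge_2[where 'a='a] by (auto intro!: gr0I)
  show "\<forall>c\<in>(\<lambda>a. w * a) ` cyc (\<theta> ^ e). c ^ f = w ^ f"
    using finite_field_power_card_minus_one[OF \<open>\<theta> \<noteq> 0\<close>] assms(2)
    by (intro ballI power_eq_if_mem_coset) (simp_all flip: power_mult)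
qed

lemma prod_sub_coset:
  fixes \<theta> w :: "'a::{finite,field}"
  assumes "primitive_elem \<theta>" and "e * f = CARD('a) - 1" and "w \<noteq> 0"
  shows "(\<Prod>c\<in>(\<lambda>a. w * a) ` cyc (\<theta> ^ e). x - c) = x ^ f - w ^ f"
  using roots_of_power_sub_coset[OF assms] by (intro prod_sub_roots_of_power_sub) simp_all

lemma LS_coset:
  fixes \<theta> w :: "'a::{finite,field}"
  assumes "primitive_elem \<theta>" and "e * f = CARD('a) - 1" and "w \<noteq> 0"
    and "b \<in> (\<lambda>a. w * a) ` cyc (\<theta> ^ e)"
  shows "LS ((\<lambda>a. w * a) ` cyc (\<theta> ^ e)) b = of_nat f * b ^ (f - 1)"
  unfolding LS_def using roots_of_power_sub_coset[OF assms(1-3)] assms(4)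
  by (intro prod_sub_other_roots_of_power_sub[where a = "w ^ f"]) simp_all

lemma coset_exponent_cong:
  fixes \<theta> :: "'a::{finite,field}"
  assumes "primitive_elem \<theta>" and "d dvd CARD('a) - 1" and "d dvd e"
    and "\<theta> powi m \<in> (\<lambda>a. \<theta> powi z * a) ` cyc (\<theta> ^ e)"
  shows "[m = z] (mod int d)"
proof -
  have "\<theta> \<noteq> 0" using assms(1) by (simp add: primitive_elem_def)
  obtain k where "\<theta> powi m = \<theta> powi z * (\<theta> ^ e) ^ k" using assms(4) by (auto simp: cyc_def)
  also have "(\<theta> ^ e) ^ k = \<theta> powi int (e * k)" by (simp only: power_int_of_nat power_mult)
  also have "\<theta> powi z * \<theta> powi int (e * k) = \<theta> powi (z + int (e * k))"
    using \<open>\<theta> \<noteq> 0\<close> by (intro power_int_add[symmetric]) simp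
  finally have "int (CARD('a) - 1) dvd m - (z + int (e * k))"
    by (simp only: primitive_elem_power_int_eq_iff[OF assms(1)])
  hence "int d dvd m - (z + int (e * k))" using assms(2) by (meson dvd_trans of_nat_dvd_iff)
  moreover have "int d dvd int (e * k)" using assms(3) by simp
  ultimately have "int d dvd (m - (z + int (e * k))) + int (e * k)" by (rule dvd_add)
  thus ?thesis by (simp add: cong_iff_dvd_diff)
qed

section \<open>The sets \<open>M\<close> and \<open>N\<close>\<close>

locale cyclotomic_union =
  fixes \<theta> :: "'a::{finite,field}"
    and r e1 f1 e2 f2 l s t :: nat
    and i j :: "nat \<Rightarrow> int"
  assumes primitive: "primitive_elem \<theta>"
    and prime_power_r: "prime_power r" and odd_r: "odd r" and card: "CARD('a) = r ^ 2"
    and e1f1: "CARD('a) - 1 = e1 * f1" and e2f2: "CARD('a) - 1 = e2 * f2"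
    and l: "l \<ge> 2" and e1_mod: "e1 mod 2 ^ (l + 1) = 2 ^ l" and pow2_dvd_e2: "2 ^ l dvd e2"
    and e2_dvd: "2 * e2 dvd e1 * (r - 1)" and e1_dvd: "e1 dvd e2 * (r + 1)"
    and i_incongruent: "\<forall>\<mu>\<in>{1..s}. \<forall>\<mu>'\<in>{1..s}. \<mu> \<noteq> \<mu>' \<longrightarrow>
            \<not> [i \<mu> = i \<mu>'] (mod int (e1 div gcd e1 e2))"
    and j_incongruent: "\<forall>\<nu>\<in>{1..t}. \<forall>\<nu>'\<in>{1..t}. \<nu> \<noteq> \<nu>' \<longrightarrow>
            \<not> [j \<nu> = j \<nu>'] (mod int (e2 div gcd e1 e2))"
begin

definition M_coset :: "nat \<Rightarrow> 'a set" where
  "M_coset \<mu> = (\<lambda>a. (\<theta> ^ e2) powi i \<mu> * a) ` cyc (\<theta> ^ e1)"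

definition N_coset :: "nat \<Rightarrow> 'a set" where
  "N_coset \<nu> = (\<lambda>a. (\<theta> ^ (e1 div 2)) powi (2 * j \<nu> + 1) * a) ` cyc (\<theta> ^ e2)"

definition M :: "'a set" where "M = (\<Union>\<mu>\<in>{1..s}. M_coset \<mu>)"

definition N :: "'a set" where "N = (\<Union>\<nu>\<in>{1..t}. N_coset \<nu>)"

lemma theta_nonzero: "\<theta> \<noteq> 0"
  using primitive by (simp add: primitive_elem_def)

lemma odd_card: "odd CARD('a)"
  using card odd_r by simp

lemma r_CHAR_power: obtains k where "r = CHAR('a) ^ k"
  using CHAR_power_if_card_eq_square[OF prime_power_r card] by blast

lemma theta_power_eq_one: "CARD('a) - 1 dvd m \<Longrightarrow> \<theta> ^ m = 1"
  using finite_field_power_card_minus_one[OF theta_nonzero] by (auto simp: power_mult elim!: dvdE)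

lemma exponents_pos: "e1 > 0" "f1 > 0" "e2 > 0" "f2 > 0"
proof -
  have "e1 * f1 > 0" "e2 * f2 > 0"
    using e1f1 e2f2 card_field_ge_2[where 'a='a] by (simp_all flip: e1f1 e2f2)
  thus "e1 > 0" "f1 > 0" "e2 > 0" "f2 > 0" by simp_all
qed

lemma e1_two_adic: obtains c where "e1 = 2 ^ l * c" and "odd c"
proof
  show "e1 = 2 ^ l * (2 * (e1 div 2 ^ (l + 1)) + 1)"
    using div_mult_mod_eq[of e1 "2 ^ (l + 1)"] e1_mod by (simp add: algebra_simps)
qed simp

lemma half_e1: "e1 = 2 * (e1 div 2)" and even_half_e1: "even (e1 div 2)"
proof -
  obtain c where c: "e1 = 2 ^ l * c" using e1_two_adic .
  obtain l' where "l = 2 + l'" using l by (auto simp: le_iff_add)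
  hence "e1 = 2 * (2 * (2 ^ l' * c))" using c by (simp add: power_add)
  thus "e1 = 2 * (e1 div 2)" and "even (e1 div 2)" by simp_all
qed

lemma even_e1: "even e1"
  by (subst half_e1) simp

lemma even_e2: "even e2"
proof -
  have "(2::nat) dvd 2 ^ l" using l by (simp add: dvd_power)
  thus ?thesis using pow2_dvd_e2 by (rule dvd_trans)
qed

lemma pow2_dvd_card: "2 ^ l dvd CARD('a) - 1"
proof -
  obtain c where "e1 = 2 ^ l * c" using e1_two_adic .
  thus ?thesis using e1f1 by (simp add: mult.assoc)
qed

lemma not_pow2_dvd_odd_multiple: "\<not> (2::int) ^ l dvd int (e1 div 2) * (2 * x + 1)"
proof
  assume "(2::int) ^ l dvd int (e1 div 2) * (2 * x + 1)"
  moreover obtain c where c: "e1 = 2 ^ l * c" "odd c" using e1_two_adic .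
  moreover obtain l' where l': "l = Suc l'" using l by (cases l) auto
  ultimately have "2 ^ l' * 2 dvd (2::int) ^ l' * (int c * (2 * x + 1))"
    by (simp add: mult_ac)
  hence "2 dvd int c * (2 * x + 1)" by (subst (asm) dvd_times_left_cancel_iff) simp_all
  thus False using c(2) by simp
qed

lemma e1_dvd_norm: "e1 dvd e2 * ((r + 1) div 2)"
proof -
  obtain c where c: "e1 = 2 ^ l * c" "odd c" using e1_two_adic .
  have "2 ^ l dvd e2 * ((r + 1) div 2)" using pow2_dvd_e2 by simp
  moreover have "2 * (e2 * ((r + 1) div 2)) = e2 * (r + 1)" using odd_r by (elim oddE) simp
  hence "e1 dvd 2 * (e2 * ((r + 1) div 2))" using e1_dvd by (simp only:)
  ultimately show ?thesis by (rule dvd_if_dvd_double_odd_part[OF c])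
qed

lemma e2_dvd_fixed: "e2 dvd e1 div 2 * (r - 1)"
proof -
  have "e1 * (r - 1) = 2 * (e1 div 2 * (r - 1))" by (subst half_e1) simp
  thus ?thesis using e2_dvd by (simp only: nat_mult_dvd_cancel_disj) simp
qed

text \<open>The \<open>f1\<close>-th powers of the cosets in \<open>M\<close> are powers of \<open>(\<theta> ^ e2) ^ f1\<close>; the hypothesis
  \<open>e1 dvd e2 * (r + 1)\<close> puts this element into the subgroup of order \<open>(r + 1) / 2\<close>.
  Likewise the \<open>f2\<close>-th powers of all cosets are powers of \<open>(\<theta> ^ (e1 div 2)) ^ f2\<close>, which
  \<open>2 * e2 dvd e1 * (r - 1)\<close> puts into \<open>\<bbbF>\<^sub>r\<close>.\<close>
lemma norm_one_generator: "((\<theta> ^ e2) ^ f1) ^ ((r + 1) div 2) = 1"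
proof -
  have "CARD('a) - 1 dvd e2 * f1 * ((r + 1) div 2)"
    using e1_dvd_norm unfolding e1f1 by (simp add: mult_ac mult_dvd_mono)
  thus ?thesis by (simp add: theta_power_eq_one flip: power_mult)
qed

lemma fixed_generator: "((\<theta> ^ (e1 div 2)) ^ f2) ^ r = (\<theta> ^ (e1 div 2)) ^ f2"
proof -
  have "CARD('a) - 1 dvd e1 div 2 * f2 * (r - 1)"
    using e2_dvd_fixed unfolding e2f2 by (simp add: mult_ac mult_dvd_mono)
  hence "((\<theta> ^ (e1 div 2)) ^ f2) ^ (r - 1) = 1" by (simp add: theta_power_eq_one flip: power_mult)
  moreover have "r = Suc (r - 1)" using odd_r by (cases r) simp_all
  ultimately show ?thesis by (metis power_Suc2 mult_1)
qed

lemma half_e1_power_f1: "(\<theta> ^ (e1 div 2)) ^ f1 = -1"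
proof -
  have "e1 div 2 * f1 = (CARD('a) - 1) div 2" using e1f1 half_e1 by (metis mult.assoc nonzero_mult_div_cancel_left zero_neq_numeral)
  thus ?thesis using primitive_elem_power_half[OF primitive odd_card] by (simp flip: power_mult)
qed

lemma M_coset_exponents: "M_coset \<mu> = (\<lambda>a. \<theta> powi (int e2 * i \<mu>) * a) ` cyc (\<theta> ^ e1)"
  by (simp add: M_coset_def power_int_power)

lemma N_coset_exponents:
  "N_coset \<nu> = (\<lambda>a. \<theta> powi (int (e1 div 2) * (2 * j \<nu> + 1)) * a) ` cyc (\<theta> ^ e2)"
  by (simp add: N_coset_def power_int_power)

lemma M_coset_nonzero: "0 \<notin> M_coset \<mu>"
  using theta_nonzero by (auto simp: M_coset_def cyc_def)

lemma N_coset_nonzero: "0 \<notin> N_coset \<nu>"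
  using theta_nonzero by (auto simp: N_coset_def cyc_def)

lemma eq_theta_power_int:
  assumes "c \<noteq> 0"
  obtains m where "c = \<theta> powi m"
  using primitive assms by (metis power_int_of_nat primitive_elem_def)

lemma M_coset_cong:
  assumes "\<theta> powi m \<in> M_coset \<mu>" and "d dvd CARD('a) - 1" and "d dvd e1"
  shows "[m = int e2 * i \<mu>] (mod int d)"
  using coset_exponent_cong[OF primitive assms(2,3)] assms(1) by (simp add: M_coset_exponents)

lemma N_coset_cong:
  assumes "\<theta> powi m \<in> N_coset \<nu>" and "d dvd CARD('a) - 1" and "d dvd e2"
  shows "[m = int (e1 div 2) * (2 * j \<nu> + 1)] (mod int d)"
  using coset_exponent_cong[OF primitive assms(2,3)] assms(1) by (simp add: N_coset_exponents)

lemma M_coset_disjoint: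
  assumes "\<mu> \<in> {1..s}" and "\<mu>' \<in> {1..s}" and "\<mu> \<noteq> \<mu>'"
  shows "M_coset \<mu> \<inter> M_coset \<mu>' = {}"
proof (rule ccontr)
  assume "M_coset \<mu> \<inter> M_coset \<mu>' \<noteq> {}"
  then obtain c where c: "c \<in> M_coset \<mu>" "c \<in> M_coset \<mu>'" by blast
  then obtain m where m: "c = \<theta> powi m" using M_coset_nonzero eq_theta_power_int by metis
  have "e1 dvd CARD('a) - 1" using e1f1 by simp
  hence "[m = int e2 * i \<mu>] (mod int e1)" "[m = int e2 * i \<mu>'] (mod int e1)"
    using M_coset_cong c m by simp_all
  hence "[int e2 * i \<mu> = int e2 * i \<mu>'] (mod int e1)" by (metis cong_sym cong_trans)
  hence "int e1 dvd int e2 * (i \<mu> - i \<mu>')" by (simp add: cong_iff_dvd_diff right_diff_distrib)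
  hence "int (e1 div gcd e1 e2) dvd i \<mu> - i \<mu>'"
    using exponents_pos by (intro int_div_gcd_dvd) auto
  thus False using i_incongruent assms by (simp add: cong_iff_dvd_diff)
qed

lemma N_coset_disjoint:
  assumes "\<nu> \<in> {1..t}" and "\<nu>' \<in> {1..t}" and "\<nu> \<noteq> \<nu>'"
  shows "N_coset \<nu> \<inter> N_coset \<nu>' = {}"
proof (rule ccontr)
  assume "N_coset \<nu> \<inter> N_coset \<nu>' \<noteq> {}"
  then obtain c where c: "c \<in> N_coset \<nu>" "c \<in> N_coset \<nu>'" by blast
  then obtain m where m: "c = \<theta> powi m" using N_coset_nonzero eq_theta_power_int by metis
  have "e2 dvd CARD('a) - 1" using e2f2 by simp
  hence "[m = int (e1 div 2) * (2 * j \<nu> + 1)] (mod int e2)"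
      "[m = int (e1 div 2) * (2 * j \<nu>' + 1)] (mod int e2)"
    using N_coset_cong c m by simp_all
  hence "[int (e1 div 2) * (2 * j \<nu> + 1) = int (e1 div 2) * (2 * j \<nu>' + 1)] (mod int e2)"
    by (metis cong_sym cong_trans)
  moreover have "int (e1 div 2) * (2 * j \<nu> + 1) - int (e1 div 2) * (2 * j \<nu>' + 1)
      = int e1 * (j \<nu> - j \<nu>')"
    by (subst (3) half_e1) (simp add: algebra_simps)
  ultimately have "int e2 dvd int e1 * (j \<nu> - j \<nu>')" by (simp add: cong_iff_dvd_diff)
  hence "int (e2 div gcd e2 e1) dvd j \<nu> - j \<nu>'"
    using exponents_pos by (intro int_div_gcd_dvd) auto
  thus False using j_incongruent assms by (simp add: cong_iff_dvd_diff gcd.commute)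
qed

text \<open>Exponents of elements of \<open>M\<close> are divisible by \<open>2 ^ l\<close>, those of \<open>N\<close> have
  \<open>2\<close>-adic valuation exactly \<open>l - 1\<close>.\<close>
lemma M_N_coset_disjoint: "M_coset \<mu> \<inter> N_coset \<nu> = {}"
proof (rule ccontr)
  assume "M_coset \<mu> \<inter> N_coset \<nu> \<noteq> {}"
  then obtain c where c: "c \<in> M_coset \<mu>" "c \<in> N_coset \<nu>" by blast
  then obtain m where m: "c = \<theta> powi m" using M_coset_nonzero eq_theta_power_int by metis
  obtain c1 where "e1 = 2 ^ l * c1" using e1_two_adic .
  hence "[m = int e2 * i \<mu>] (mod 2 ^ l)"
    using M_coset_cong[of m \<mu> "2 ^ l"] c m pow2_dvd_card by simp
  moreover have "[m = int (e1 div 2) * (2 * j \<nu> + 1)] (mod 2 ^ l)"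
    using N_coset_cong[of m \<nu> "2 ^ l"] c m pow2_dvd_card pow2_dvd_e2 by simp
  ultimately have "[int e2 * i \<mu> = int (e1 div 2) * (2 * j \<nu> + 1)] (mod 2 ^ l)"
    by (metis cong_sym cong_trans)
  moreover have "(2::int) ^ l dvd int e2 * i \<mu>"
    using pow2_dvd_e2 int_dvd_int_iff[of "2 ^ l" e2] by simp
  ultimately have "(2::int) ^ l dvd int (e1 div 2) * (2 * j \<nu> + 1)"
    by (simp add: cong_dvd_iff)
  thus False using not_pow2_dvd_odd_multiple by blast
qed

lemma M_N_disjoint: "M \<inter> N = {}"
  using M_N_coset_disjoint by (auto simp: M_def N_def)

lemma power_half_even_exponent:
  assumes "even m"
  shows "(\<theta> powi m) ^ ((CARD('a) - 1) div 2) = 1"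
proof -
  have "\<theta> powi m = (\<theta> powi (m div 2)) ^ 2" using assms by (simp add: power_int_power')
  thus ?thesis using power_half_square[OF odd_card] theta_nonzero by simp
qed

lemma M_coset_power_half:
  assumes "c \<in> M_coset \<mu>"
  shows "c ^ ((CARD('a) - 1) div 2) = 1"
proof -
  obtain m where m: "c = \<theta> powi m" using assms M_coset_nonzero eq_theta_power_int by metis
  have "2 dvd CARD('a) - 1" "2 dvd e1" using odd_card even_e1 by simp_all
  hence "[m = int e2 * i \<mu>] (mod 2)" using M_coset_cong assms m by fastforce
  hence "even m" using even_e2 by (simp add: cong_iff_dvd_diff)
  thus ?thesis using m power_half_even_exponent by simp
qed

lemma N_coset_power_half:
  assumes "c \<in> N_coset \<nu>"
  shows "c ^ ((CARD('a) - 1) div 2) = 1"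
proof -
  obtain m where m: "c = \<theta> powi m" using assms N_coset_nonzero eq_theta_power_int by metis
  have "2 dvd CARD('a) - 1" "2 dvd e2" using odd_card even_e2 by simp_all
  hence "[m = int (e1 div 2) * (2 * j \<nu> + 1)] (mod 2)" using N_coset_cong assms m by fastforce
  hence "even m" using even_half_e1 by (simp add: cong_iff_dvd_diff)
  thus ?thesis using m power_half_even_exponent by simp
qed

lemma M_coset_power_norm:
  assumes "c \<in> M_coset \<mu>"
  shows "(c ^ f1) ^ ((r + 1) div 2) = 1"
proof -
  have "(\<theta> ^ e1) ^ f1 = 1" using e1f1 by (simp add: theta_power_eq_one flip: power_mult)
  hence "c ^ f1 = ((\<theta> ^ e2) powi i \<mu>) ^ f1"
    using assms unfolding M_coset_def by (rule power_eq_if_mem_coset)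
  hence "(c ^ f1) ^ ((r + 1) div 2) = (((\<theta> ^ e2) ^ f1) ^ ((r + 1) div 2)) powi i \<mu>"
    by (simp only: power_int_power_commute)
  thus ?thesis unfolding norm_one_generator by simp
qed

lemma N_coset_power_norm:
  assumes "c \<in> N_coset \<nu>"
  shows "(- (c ^ f1)) ^ ((r + 1) div 2) = 1"
proof -
  obtain k where "c = (\<theta> ^ (e1 div 2)) powi (2 * j \<nu> + 1) * (\<theta> ^ e2) ^ k"
    using assms by (auto simp: N_coset_def cyc_def)
  hence "c ^ f1 = ((\<theta> ^ (e1 div 2)) ^ f1) powi (2 * j \<nu> + 1) * ((\<theta> ^ e2) ^ f1) ^ k"
    by (simp only: power_mult_distrib power_int_power_commute power_power_commute)
  also have "((\<theta> ^ (e1 div 2)) ^ f1) powi (2 * j \<nu> + 1) = -1"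
    by (simp add: half_e1_power_f1 power_int_add power_int_mult)
  finally have "(- (c ^ f1)) ^ ((r + 1) div 2) = (((\<theta> ^ e2) ^ f1) ^ ((r + 1) div 2)) ^ k"
    by (simp add: power_power_commute)
  thus ?thesis unfolding norm_one_generator by simp
qed

lemma M_coset_power_fixed:
  assumes "c \<in> M_coset \<mu>"
  shows "(c ^ f2) ^ r = c ^ f2"
proof -
  obtain k where "c = (\<theta> ^ e2) powi i \<mu> * (\<theta> ^ e1) ^ k"
    using assms by (auto simp: M_coset_def cyc_def)
  hence "c ^ f2 = ((\<theta> ^ e2) ^ f2) powi i \<mu> * ((\<theta> ^ e1) ^ f2) ^ k"
    by (simp only: power_mult_distrib power_int_power_commute power_power_commute)
  also have "(\<theta> ^ e2) ^ f2 = 1" using e2f2 by (simp add: theta_power_eq_one flip: power_mult)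
  also have "(\<theta> ^ e1) ^ f2 = ((\<theta> ^ (e1 div 2)) ^ f2) ^ 2"
    by (subst half_e1) (simp add: power_mult power_power_commute)
  finally have "c ^ f2 = ((\<theta> ^ (e1 div 2)) ^ f2) ^ (2 * k)" by (simp add: power_mult)
  thus ?thesis using fixed_generator by (simp add: power_power_commute[of _ _ r])
qed

lemma N_coset_power_fixed:
  assumes "c \<in> N_coset \<nu>"
  shows "(c ^ f2) ^ r = c ^ f2"
proof -
  have "(\<theta> ^ e2) ^ f2 = 1" using e2f2 by (simp add: theta_power_eq_one flip: power_mult)
  hence "c ^ f2 = ((\<theta> ^ (e1 div 2)) powi (2 * j \<nu> + 1)) ^ f2"
    using assms unfolding N_coset_def by (rule power_eq_if_mem_coset)
  also have "\<dots> = ((\<theta> ^ (e1 div 2)) ^ f2) powi (2 * j \<nu> + 1)" by (rule power_int_power_commute)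
  finally show ?thesis using fixed_generator by (simp add: power_int_power_eq_if_power_eq)
qed

lemma prod_sub_M_coset: "(\<Prod>c\<in>M_coset \<mu>. x - c) = x ^ f1 - ((\<theta> ^ e2) powi i \<mu>) ^ f1"
  unfolding M_coset_def using e1f1 theta_nonzero by (intro prod_sub_coset[OF primitive]) simp_all

lemma prod_sub_N_coset: "(\<Prod>c\<in>N_coset \<nu>. x - c) = x ^ f2 - ((\<theta> ^ (e1 div 2)) powi (2 * j \<nu> + 1)) ^ f2"
  unfolding N_coset_def using e2f2 theta_nonzero by (intro prod_sub_coset[OF primitive]) simp_all

lemma power_half_LS_M_coset:
  assumes "b \<in> M_coset \<mu>"
  shows "LS (M_coset \<mu>) b ^ ((CARD('a) - 1) div 2) = 1"
proof -
  obtain k where k: "r = CHAR('a) ^ k" using r_CHAR_power .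
  have "LS (M_coset \<mu>) b = of_nat f1 * b ^ (f1 - 1)"
    using assms e1f1 theta_nonzero unfolding M_coset_def by (intro LS_coset[OF primitive]) simp_all
  moreover have "(of_nat f1 :: 'a) ^ ((CARD('a) - 1) div 2) = 1"
    using e1f1 by (intro power_half_of_nat[OF card k odd_r]) simp
  ultimately show ?thesis
    using M_coset_power_half[OF assms] power_power_commute[of b "f1 - 1" "(CARD('a) - 1) div 2"]
    by (simp add: power_mult_distrib)
qed

lemma power_half_LS_N_coset:
  assumes "b \<in> N_coset \<nu>"
  shows "LS (N_coset \<nu>) b ^ ((CARD('a) - 1) div 2) = 1"
proof -
  obtain k where k: "r = CHAR('a) ^ k" using r_CHAR_power .
  have "LS (N_coset \<nu>) b = of_nat f2 * b ^ (f2 - 1)"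
    using assms e2f2 theta_nonzero unfolding N_coset_def by (intro LS_coset[OF primitive]) simp_all
  moreover have "(of_nat f2 :: 'a) ^ ((CARD('a) - 1) div 2) = 1"
    using e2f2 by (intro power_half_of_nat[OF card k odd_r]) simp
  ultimately show ?thesis
    using N_coset_power_half[OF assms] power_power_commute[of b "f2 - 1" "(CARD('a) - 1) div 2"]
    by (simp add: power_mult_distrib)
qed

lemma power_half_prod_M_coset_at_M:
  assumes "b \<in> M_coset \<mu>0" and "b \<notin> M_coset \<mu>"
  shows "(\<Prod>c\<in>M_coset \<mu>. b - c) ^ ((CARD('a) - 1) div 2) = (-1) ^ ((r + 1) div 2)"
proof -
  obtain k where k: "r = CHAR('a) ^ k" using r_CHAR_power .
  define w where "w = (\<theta> ^ e2) powi i \<mu>"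
  have "w \<in> M_coset \<mu>" unfolding w_def M_coset_def by (rule mem_coset_self)
  have "(\<Prod>c\<in>M_coset \<mu>. b - c) \<noteq> 0" using assms(2) by simp
  hence "b ^ f1 \<noteq> w ^ f1" by (simp add: prod_sub_M_coset w_def)
  thus ?thesis
    unfolding prod_sub_M_coset w_def[symmetric]
    using M_coset_power_norm[OF assms(1)] M_coset_power_norm[OF \<open>w \<in> M_coset \<mu>\<close>]
    by (intro power_half_diff_norm_one_squares[OF card k odd_r])
qed

lemma power_half_prod_M_coset_at_N:
  assumes "b \<in> N_coset \<nu>0"
  shows "(\<Prod>c\<in>M_coset \<mu>. b - c) ^ ((CARD('a) - 1) div 2) = 1"
proof -
  obtain k where k: "r = CHAR('a) ^ k" using r_CHAR_power .
  define w where "w = (\<theta> ^ e2) powi i \<mu>"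
  have "w \<in> M_coset \<mu>" unfolding w_def M_coset_def by (rule mem_coset_self)
  have "b \<notin> M_coset \<mu>" using assms M_N_coset_disjoint by blast
  hence "(\<Prod>c\<in>M_coset \<mu>. b - c) \<noteq> 0" by simp
  hence "b ^ f1 \<noteq> w ^ f1" by (simp add: prod_sub_M_coset w_def)
  thus ?thesis
    unfolding prod_sub_M_coset w_def[symmetric]
    using N_coset_power_norm[OF assms(1)] M_coset_power_norm[OF \<open>w \<in> M_coset \<mu>\<close>]
    by (intro power_half_diff_neg_norm_one_squares[OF card k odd_r])
qed

lemma power_half_prod_N_coset:
  assumes "(b ^ f2) ^ r = b ^ f2" and "b \<notin> N_coset \<nu>"
  shows "(\<Prod>c\<in>N_coset \<nu>. b - c) ^ ((CARD('a) - 1) div 2) = 1"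
proof -
  obtain k where k: "r = CHAR('a) ^ k" using r_CHAR_power .
  define w where "w = (\<theta> ^ (e1 div 2)) powi (2 * j \<nu> + 1)"
  have "w \<in> N_coset \<nu>" unfolding w_def N_coset_def by (rule mem_coset_self)
  have "(\<Prod>c\<in>N_coset \<nu>. b - c) \<noteq> 0" using assms(2) by simp
  hence "b ^ f2 \<noteq> w ^ f2" by (simp add: prod_sub_N_coset w_def)
  thus ?thesis
    unfolding prod_sub_N_coset w_def[symmetric]
    using assms(1) N_coset_power_fixed[OF \<open>w \<in> N_coset \<nu>\<close>]
    by (intro power_half_diff_fixed[OF card k odd_r])
qed

lemma LS_at_M_coset:
  assumes "\<mu>0 \<in> {1..s}" and "b \<in> M_coset \<mu>0"
  shows "LS (M \<union> N) b = LS (M_coset \<mu>0) b * (\<Prod>\<mu>\<in>{1..s} - {\<mu>0}. \<Prod>c\<in>M_coset \<mu>. b - c)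
    * (\<Prod>\<nu>\<in>{1..t}. \<Prod>c\<in>N_coset \<nu>. b - c)"
proof -
  have "b \<in> M" using assms by (auto simp: M_def)
  hence "LS (M \<union> N) b = LS M b * (\<Prod>c\<in>N. b - c)" using M_N_disjoint by (intro LS_union) auto
  also have "LS M b = LS (M_coset \<mu>0) b * (\<Prod>\<mu>\<in>{1..s} - {\<mu>0}. \<Prod>c\<in>M_coset \<mu>. b - c)"
    unfolding M_def using M_coset_disjoint assms by (intro LS_UN) auto
  also have "(\<Prod>c\<in>N. b - c) = (\<Prod>\<nu>\<in>{1..t}. \<Prod>c\<in>N_coset \<nu>. b - c)"
    unfolding N_def using N_coset_disjoint by (intro prod.UNION_disjoint) auto
  finally show ?thesis .
qed

lemma LS_at_N_coset:
  assumes "\<nu>0 \<in> {1..t}" and "b \<in> N_coset \<nu>0"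
  shows "LS (M \<union> N) b = LS (N_coset \<nu>0) b * (\<Prod>\<nu>\<in>{1..t} - {\<nu>0}. \<Prod>c\<in>N_coset \<nu>. b - c)
    * (\<Prod>\<mu>\<in>{1..s}. \<Prod>c\<in>M_coset \<mu>. b - c)"
proof -
  have "b \<in> N" using assms by (auto simp: N_def)
  hence "LS (N \<union> M) b = LS N b * (\<Prod>c\<in>M. b - c)" using M_N_disjoint by (intro LS_union) auto
  also have "LS N b = LS (N_coset \<nu>0) b * (\<Prod>\<nu>\<in>{1..t} - {\<nu>0}. \<Prod>c\<in>N_coset \<nu>. b - c)"
    unfolding N_def using N_coset_disjoint assms by (intro LS_UN) auto
  also have "(\<Prod>c\<in>M. b - c) = (\<Prod>\<mu>\<in>{1..s}. \<Prod>c\<in>M_coset \<mu>. b - c)"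
    unfolding M_def using M_coset_disjoint by (intro prod.UNION_disjoint) auto
  finally show ?thesis by (simp add: Un_commute)
qed

lemma qchar_LS_at_M:
  assumes "\<mu>0 \<in> {1..s}" and "b \<in> M_coset \<mu>0"
  shows "qchar (LS (M \<union> N) b) = (-1) ^ ((s - 1) * (r + 1) div 2)"
proof -
  define h where "h = (CARD('a) - 1) div 2"
  have "(\<Prod>\<mu>\<in>{1..s} - {\<mu>0}. \<Prod>c\<in>M_coset \<mu>. b - c) ^ h
      = (\<Prod>\<mu>\<in>{1..s} - {\<mu>0}. (\<Prod>c\<in>M_coset \<mu>. b - c) ^ h)" by (rule prod_power_distrib)
  also have "\<dots> = (\<Prod>\<mu>\<in>{1..s} - {\<mu>0}. (-1) ^ ((r + 1) div 2))"
    unfolding h_def using assms M_coset_disjoint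
    by (intro prod.cong refl power_half_prod_M_coset_at_M[OF assms(2)]) blast
  also have "\<dots> = ((-1) ^ ((r + 1) div 2)) ^ (s - 1)"
    using assms(1) by (simp only: prod_constant card_Diff_singleton card_atLeastAtMost) simp
  also have "\<dots> = (-1) ^ ((s - 1) * (r + 1) div 2)"
  proof -
    have "(s - 1) * (r + 1) div 2 = (r + 1) div 2 * (s - 1)" using odd_r by (elim oddE) simp
    thus ?thesis by (metis power_mult)
  qed
  finally have M_part: "(\<Prod>\<mu>\<in>{1..s} - {\<mu>0}. \<Prod>c\<in>M_coset \<mu>. b - c) ^ h
      = (-1) ^ ((s - 1) * (r + 1) div 2)" .
  have N_part: "(\<Prod>\<nu>\<in>{1..t}. \<Prod>c\<in>N_coset \<nu>. b - c) ^ h = 1"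
    unfolding h_def
    by (rule prod_power_eq_one, rule power_half_prod_N_coset[OF M_coset_power_fixed[OF assms(2)]])
      (use assms(2) M_N_coset_disjoint in blast)
  have "LS (M \<union> N) b ^ h = (-1) ^ ((s - 1) * (r + 1) div 2)"
    using power_half_LS_M_coset[OF assms(2)] M_part N_part
    unfolding LS_at_M_coset[OF assms] power_mult_distrib h_def by simp
  thus ?thesis
    unfolding h_def using M_N_disjoint by (intro qchar_eq_sign_if_power_half[OF primitive odd_card LS_nonzero]) simp
qed

lemma qchar_LS_at_N:
  assumes "\<nu>0 \<in> {1..t}" and "b \<in> N_coset \<nu>0"
  shows "qchar (LS (M \<union> N) b) = 1"
proof -
  define h where "h = (CARD('a) - 1) div 2"
  have N_part: "(\<Prod>\<nu>\<in>{1..t} - {\<nu>0}. \<Prod>c\<in>N_coset \<nu>. b - c) ^ h = 1"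
    unfolding h_def
    by (rule prod_power_eq_one, rule power_half_prod_N_coset[OF N_coset_power_fixed[OF assms(2)]])
      (use assms N_coset_disjoint in blast)
  have M_part: "(\<Prod>\<mu>\<in>{1..s}. \<Prod>c\<in>M_coset \<mu>. b - c) ^ h = 1"
    unfolding h_def by (rule prod_power_eq_one, rule power_half_prod_M_coset_at_N[OF assms(2)])
  have "LS (M \<union> N) b ^ h = (-1) ^ 0"
    using power_half_LS_N_coset[OF assms(2)] M_part N_part
    unfolding LS_at_N_coset[OF assms] power_mult_distrib h_def by simp
  hence "qchar (LS (M \<union> N) b) = (-1) ^ 0"
    unfolding h_def by (intro qchar_eq_sign_if_power_half[OF primitive odd_card LS_nonzero]) simp_all
  thus ?thesis by simp
qed

end

theorem mainTheorem6:
  fixes \<theta> :: "'a::{finite,field}"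
    and r e1 f1 e2 f2 l s t :: nat
    and i j :: "nat \<Rightarrow> int"
  assumes "prime_power r" and "odd r"
    and "CARD('a) = r ^ 2"
    and "primitive_elem \<theta>"
    and "e1 > 0" "f1 > 0" "e2 > 0" "f2 > 0"
    and "CARD('a) - 1 = e1 * f1" and "CARD('a) - 1 = e2 * f2"
    and "l \<ge> 2" and "e1 mod 2 ^ (l + 1) = 2 ^ l" and "2 ^ l dvd e2"
    and "2 * e2 dvd e1 * (r - 1)" and "e1 dvd e2 * (r + 1)"
    and "1 \<le> s" "s \<le> e1 div gcd e1 e2"
    and "1 \<le> t" "t \<le> e2 div gcd e1 e2"
    and "\<forall>\<mu>\<in>{1..s}. \<forall>\<mu>'\<in>{1..s}. \<mu> \<noteq> \<mu>' \<longrightarrow>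
            \<not> [i \<mu> = i \<mu>'] (mod int (e1 div gcd e1 e2))"
    and "\<forall>\<nu>\<in>{1..t}. \<forall>\<nu>'\<in>{1..t}. \<nu> \<noteq> \<nu>' \<longrightarrow>
            \<not> [j \<nu> = j \<nu>'] (mod int (e2 div gcd e1 e2))"
  shows "let A = cyc (\<theta> ^ e1); B = cyc (\<theta> ^ e2);
             \<beta> = \<theta> ^ e2; \<gamma> = \<theta> ^ (e1 div 2);
             M = (\<Union>\<mu>\<in>{1..s}. (\<lambda>a. \<beta> powi (i \<mu>) * a) ` A);
             N = (\<Union>\<nu>\<in>{1..t}. (\<lambda>a. \<gamma> powi (2 * j \<nu> + 1) * a) ` B);
             S = M \<union> N
         in (\<forall>b\<in>M. qchar (LS S b) = (-1) ^ ((s - 1) * (r + 1) div 2))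
          \<and> (\<forall>b\<in>N. qchar (LS S b) = 1)"
proof -
  \<comment> \<open>The positivity hypotheses follow from the factorisations of \<open>q - 1\<close>, and the bounds on
    \<open>s\<close> and \<open>t\<close> from the incongruence hypotheses.\<close>
  interpret cyclotomic_union \<theta> r e1 f1 e2 f2 l s t i j
    by unfold_locales (fact assms)+
  have "\<forall>b\<in>M. qchar (LS (M \<union> N) b) = (-1) ^ ((s - 1) * (r + 1) div 2)"
    using qchar_LS_at_M by (auto simp: M_def)
  moreover have "\<forall>b\<in>N. qchar (LS (M \<union> N) b) = 1"
    using qchar_LS_at_N by (auto simp: N_def)
  ultimately show ?thesis unfolding Let_def M_def N_def M_coset_def N_coset_def by (rule conjI)
qed

end
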